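(* Let $a,b,c\in\mathbb{R}$ satisfy $a+b+c\equiv 0 \pmod{2\pi}$ and $\sin c\neq 0$. Let $P$ be the plane $\{(x,y,z): x\sin a+y\sin b+z\sin c=0\}$ and let $H$ be the hexagon $P\cap[-1,1]^3$. Let $E$ be the ellipse inscribed in $H$ (the unique ellipse contained in $H$ and tangent to all six sides of $H$). For $t\in(-1,1)$ let $E_t=\{(x,y)\in\mathbb{R}^2 : 1-x^2-y^2-t^2+2xyt=0\}$. Then the image of $E$ under the projection $(x,y,z)\mapsto(x,y)$ is $E_{\cos c}$.
   Context: For $t\in(-1,1)$, $E_t$ is an ellipse inscribed in the square $[-1,1]^2$, tangent to it at $\pm(t,1)$ and $\pm(1,t)$. *)

theory Defs
  imports "HOL-Analysis.Analysis"
begin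

type_synonym pt3 = "real \<times> real \<times> real"

definition plane_P :: "real \<Rightarrow> real \<Rightarrow> real \<Rightarrow> pt3 set" where
  "plane_P a b c = {(x,y,z). x * sin a + y * sin b + z * sin c = 0}"

definition cube3 :: "pt3 set" where
  "cube3 = {(x,y,z). -1 \<le> x \<and> x \<le> 1 \<and> -1 \<le> y \<and> y \<le> 1 \<and> -1 \<le> z \<and> z \<le> 1}"

definition hexH :: "real \<Rightarrow> real \<Rightarrow> real \<Rightarrow> pt3 set" where
  "hexH a b c = plane_P a b c \<inter> cube3"

definition coord3 :: "nat \<Rightarrow> pt3 \<Rightarrow> real" where
  "coord3 i p = (if i = 0 then fst p else if i = 1 then fst (snd p) else snd (snd p))"

text \<open>The sides of H: its intersections with the six faces of the cube
  (k = 0,1,2: faces x=1, y=1, z=1; k = 3,4,5: faces x=-1, y=-1, z=-1).\<close>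
definition hex_side :: "real \<Rightarrow> real \<Rightarrow> real \<Rightarrow> nat \<Rightarrow> pt3 set" where
  "hex_side a b c k = {p \<in> hexH a b c. coord3 (k mod 3) p = (if k < 3 then 1 else -1)}"

definition is_hexagon :: "real \<Rightarrow> real \<Rightarrow> real \<Rightarrow> bool" where
  "is_hexagon a b c \<longleftrightarrow>
     (\<forall>k<6. infinite (hex_side a b c k)) \<and>
     (\<forall>k<6. \<forall>l<6. k \<noteq> l \<longrightarrow> hex_side a b c k \<noteq> hex_side a b c l)"

text \<open>An ellipse in R^3 (lying in some plane): the image of the unit circle
  under an injective affine map, i.e. {C + cos s u + sin s v} with u, v linearly independent.\<close>
definition ellipse3 :: "pt3 set \<Rightarrow> bool" where
  "ellipse3 E \<longleftrightarrow> (\<exists>C u v. (\<forall>\<alpha> \<beta>. \<alpha> *\<^sub>R u + \<beta> *\<^sub>R v = 0 \<longrightarrow> \<alpha> = 0 \<and> \<beta> = 0) \<and>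
       E = {C + cos s *\<^sub>R u + sin s *\<^sub>R v | s. True})"

text \<open>E is tangent to the segment S: the line through S meets E in exactly one point,
  and that point lies on S.\<close>
definition tangent_to_segment :: "pt3 set \<Rightarrow> pt3 set \<Rightarrow> bool" where
  "tangent_to_segment E S \<longleftrightarrow> (\<exists>q\<in>S. E \<inter> affine hull S = {q})"

definition inscribed_ellipse :: "real \<Rightarrow> real \<Rightarrow> real \<Rightarrow> pt3 set \<Rightarrow> bool" where
  "inscribed_ellipse a b c E \<longleftrightarrow> ellipse3 E \<and> E \<subseteq> hexH a b c \<and>
     (\<forall>k<6. tangent_to_segment E (hex_side a b c k))"

definition E_t :: "real \<Rightarrow> (real \<times> real) set" where
  "E_t t = {(x,y). 1 - x^2 - y^2 - t^2 + 2*x*y*t = 0}"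

definition proj_xy :: "pt3 \<Rightarrow> real \<times> real" where
  "proj_xy p = (fst p, fst (snd p))"

end

theory Submission
  imports Defs
begin

text \<open>
  Write E as s \<mapsto> C + cos s u + sin s v. Each coordinate of this curve is a sinusoid
  confined to [-1, 1] that reaches both 1 and -1 (tangency to two opposite sides), so
  C = 0 and the rows wi = (ui, vi) are unit vectors of the plane. The plane equation says
  sin a w1 + sin b w2 + sin c w3 = 0; taking squared norms and using a + b + c \<equiv> 0 gives
  \<langle>w1, w2\<rangle> = cos c, provided sin a and sin b do not vanish, which is what the
  non-degeneracy of the hexagon guarantees. The projection of E is the curve
  s \<mapsto> (\<langle>w1, e(s)\<rangle>, \<langle>w2, e(s)\<rangle>) with e(s) = (cos s, sin s), and the vanishing of the Gram
  determinant of w1, w2, e(s) is exactly the equation of E_t with t = cos c.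
\<close>

lemma sinusoid_fills_unit_interval:
  fixes C u v :: real
  assumes bounded: "\<And>s. \<bar>C + u * cos s + v * sin s\<bar> \<le> 1"
    and top: "C + u * cos s1 + v * sin s1 = 1"
    and bottom: "C + u * cos s2 + v * sin s2 = -1"
  shows "C = 0" and "u\<^sup>2 + v\<^sup>2 = 1"
proof -
  obtain r t where polar: "u = r * cos t" "v = r * sin t"
    using polar_Ex by blast
  have shift: "u * cos s + v * sin s = r * cos (s - t)" for s
    by (simp add: polar cos_diff algebra_simps)
  have "\<bar>C + r\<bar> \<le> 1" "\<bar>C - r\<bar> \<le> 1"
    using bounded[of t] bounded[of "t + pi"] shift[of t] shift[of "t + pi"] by simp_all
  moreover have amplitude: "\<bar>r * cos s\<bar> \<le> \<bar>r\<bar>" for s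
    by (simp add: abs_mult mult_left_le)
  ultimately have "C = 0 \<and> \<bar>r\<bar> = 1"
    using top bottom shift[of s1] shift[of s2] amplitude[of "s1 - t"] amplitude[of "s2 - t"]
    by linarith
  moreover have "u\<^sup>2 + v\<^sup>2 = r\<^sup>2"
    by (simp add: polar power_mult_distrib flip: distrib_left)
  ultimately show "C = 0" "u\<^sup>2 + v\<^sup>2 = 1"
    by (auto simp: power2_eq_1_iff abs_if split: if_splits)
qed

lemma tangent_to_segment_meets:
  "tangent_to_segment E S \<Longrightarrow> E \<inter> S \<noteq> {}"
  unfolding tangent_to_segment_def by blast

lemma coord3_add: "coord3 i (p + q) = coord3 i p + coord3 i q"
  by (simp add: coord3_def)

lemma coord3_scaleR: "coord3 i (r *\<^sub>R p) = r * coord3 i p"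
  by (simp add: coord3_def)

lemma pt3_eq_iff_coord3: "p = q \<longleftrightarrow> (\<forall>i<3. coord3 i p = coord3 i q)"
  by (cases p; cases q) (auto simp: coord3_def numeral_3_eq_3 less_Suc_eq)

lemma cube3_iff_coord3: "p \<in> cube3 \<longleftrightarrow> (\<forall>i<3. \<bar>coord3 i p\<bar> \<le> 1)"
  by (cases p) (auto simp: cube3_def coord3_def numeral_3_eq_3 less_Suc_eq)

lemma inscribed_ellipse_centred:
  assumes "inscribed_ellipse a b c E"
  obtains u v where "E = range (\<lambda>s. cos s *\<^sub>R u + sin s *\<^sub>R v)"
    and "\<And>i. i < 3 \<Longrightarrow> (coord3 i u)\<^sup>2 + (coord3 i v)\<^sup>2 = 1"
    and "u \<in> plane_P a b c" and "v \<in> plane_P a b c"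
proof -
  obtain C u v where E: "E = range (\<lambda>s. C + cos s *\<^sub>R u + sin s *\<^sub>R v)"
    using assms unfolding inscribed_ellipse_def ellipse3_def by blast
  have in_hex: "C + cos s *\<^sub>R u + sin s *\<^sub>R v \<in> hexH a b c" for s
    using assms E unfolding inscribed_ellipse_def by blast
  have coords: "coord3 i C = 0 \<and> (coord3 i u)\<^sup>2 + (coord3 i v)\<^sup>2 = 1" if "i < 3" for i
  proof -
    let ?f = "\<lambda>s. coord3 i C + coord3 i u * cos s + coord3 i v * sin s"
    have f: "coord3 i (C + cos s *\<^sub>R u + sin s *\<^sub>R v) = ?f s" for s
      by (simp add: coord3_add coord3_scaleR mult.commute)
    have "\<bar>?f s\<bar> \<le> 1" for s
      using in_hex[of s] that by (simp add: hexH_def cube3_iff_coord3 flip: f)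
    moreover have "\<exists>s. ?f s = (if k < 3 then 1 else -1)" if "k < 6" "k mod 3 = i" for k
    proof -
      have "E \<inter> hex_side a b c k \<noteq> {}"
        using tangent_to_segment_meets assms \<open>k < 6\<close> unfolding inscribed_ellipse_def by blast
      then obtain s where "coord3 i (C + cos s *\<^sub>R u + sin s *\<^sub>R v) = (if k < 3 then 1 else -1)"
        using \<open>k mod 3 = i\<close> unfolding E hex_side_def by blast
      then show ?thesis
        unfolding f by blast
    qed
    from this[of i] this[of "i + 3"] obtain s1 s2 where "?f s1 = 1" "?f s2 = -1"
      using \<open>i < 3\<close> by auto
    ultimately show ?thesis
      using sinusoid_fills_unit_interval[of "coord3 i C" "coord3 i u" "coord3 i v"] by blast
  qed
  then have "C = 0"
    using pt3_eq_iff_coord3[of C 0] by (simp add: coord3_def)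
  moreover have "u \<in> plane_P a b c" "v \<in> plane_P a b c"
    using in_hex[of 0] in_hex[of "pi / 2"] \<open>C = 0\<close> unfolding hexH_def by auto
  ultimately show thesis
    using that[of u v] E coords by simp
qed

lemma hex_side_eq_if_coord_proportional:
  assumes "i < 3" and "j < 3" and "\<bar>\<sigma>\<bar> = 1"
    and "\<And>p. p \<in> plane_P a b c \<Longrightarrow> coord3 i p = \<sigma> * coord3 j p"
  shows "hex_side a b c i = hex_side a b c (if \<sigma> = 1 then j else j + 3)"
proof -
  have "\<sigma> = 1 \<or> \<sigma> = -1"
    using assms(3) by (cases "\<sigma> < 0") auto
  have "coord3 i p = 1 \<longleftrightarrow> coord3 j p = \<sigma>" if "p \<in> plane_P a b c" for p
    using assms(3) assms(4)[OF that] by (auto simp: abs_if split: if_splits)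
  then show ?thesis
    using \<open>\<sigma> = 1 \<or> \<sigma> = -1\<close> \<open>i < 3\<close> \<open>j < 3\<close> unfolding hex_side_def hexH_def
    by (intro Collect_cong) auto
qed

lemma is_hexagon_sin_nonzero:
  assumes hex: "is_hexagon a b c"
    and sin_c: "sin c = - sin (a + b)" and "sin c \<noteq> 0"
  shows "sin a \<noteq> 0" and "sin b \<noteq> 0"
proof -
  have distinct_sides: "hex_side a b c k \<noteq> hex_side a b c l" if "k < 6" "l < 6" "k \<noteq> l" for k l
    using hex that unfolding is_hexagon_def by blast
  show "sin a \<noteq> 0"
  proof
    assume "sin a = 0"
    then have "sin b \<noteq> 0" "\<bar>cos a\<bar> = 1"
      using \<open>sin c \<noteq> 0\<close> sin_c by (auto simp: sin_add sin_zero_abs_cos_one)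
    have "coord3 1 p = cos a * coord3 2 p" if "p \<in> plane_P a b c" for p
      using that \<open>sin a = 0\<close> \<open>sin b \<noteq> 0\<close> sin_c
      by (auto simp: plane_P_def coord3_def sin_add algebra_simps)
    then have "hex_side a b c 1 = hex_side a b c (if cos a = 1 then 2 else 5)"
      using hex_side_eq_if_coord_proportional[of 1 2 "cos a"] \<open>\<bar>cos a\<bar> = 1\<close> by simp
    then show False
      using distinct_sides[of 1 "if cos a = 1 then 2 else 5"] by (cases "cos a = 1") auto
  qed
  show "sin b \<noteq> 0"
  proof
    assume "sin b = 0"
    then have "sin a \<noteq> 0" "\<bar>cos b\<bar> = 1"
      using \<open>sin c \<noteq> 0\<close> sin_c by (auto simp: sin_add sin_zero_abs_cos_one)
    have "coord3 0 p = cos b * coord3 2 p" if "p \<in> plane_P a b c" for p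
      using that \<open>sin b = 0\<close> \<open>sin a \<noteq> 0\<close> sin_c
      by (auto simp: plane_P_def coord3_def sin_add algebra_simps)
    then have "hex_side a b c 0 = hex_side a b c (if cos b = 1 then 2 else 5)"
      using hex_side_eq_if_coord_proportional[of 0 2 "cos b"] \<open>\<bar>cos b\<bar> = 1\<close> by simp
    then show False
      using distinct_sides[of 0 "if cos b = 1 then 2 else 5"] by (cases "cos b = 1") auto
  qed
qed

lemma unit_rows_inner_eq_cos:
  fixes u1 u2 u3 v1 v2 v3 a b :: real
  assumes unit: "u1\<^sup>2 + v1\<^sup>2 = 1" "u2\<^sup>2 + v2\<^sup>2 = 1" "u3\<^sup>2 + v3\<^sup>2 = 1"
    and u: "u1 * sin a + u2 * sin b = u3 * sin (a + b)"
    and v: "v1 * sin a + v2 * sin b = v3 * sin (a + b)"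
    and "sin a \<noteq> 0" "sin b \<noteq> 0"
  shows "u1 * u2 + v1 * v2 = cos (a + b)"
proof -
  have "(sin (a + b))\<^sup>2 = (u3 * sin (a + b))\<^sup>2 + (v3 * sin (a + b))\<^sup>2"
    using unit(3) by (simp add: power_mult_distrib flip: distrib_right)
  also have "\<dots> = (sin a)\<^sup>2 + (sin b)\<^sup>2 + 2 * sin a * sin b * (u1 * u2 + v1 * v2)"
    unfolding u[symmetric] v[symmetric] using unit(1,2) by algebra
  finally have "sin a * sin b * (sin a * sin b + (u1 * u2 + v1 * v2) - cos a * cos b) = 0"
    using sin_cos_squared_add[of a] sin_cos_squared_add[of b] unfolding sin_add by algebra
  then show ?thesis
    using \<open>sin a \<noteq> 0\<close> \<open>sin b \<noteq> 0\<close> by (simp add: cos_add)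
qed

lemma gram_det_plane_vanishes:
  fixes p1 q1 p2 q2 p3 q3 :: real
  shows "(p1\<^sup>2 + q1\<^sup>2) * (p2\<^sup>2 + q2\<^sup>2) * (p3\<^sup>2 + q3\<^sup>2)
      + 2 * (p1 * p2 + q1 * q2) * (p1 * p3 + q1 * q3) * (p2 * p3 + q2 * q3)
      - (p1\<^sup>2 + q1\<^sup>2) * (p2 * p3 + q2 * q3)\<^sup>2 - (p2\<^sup>2 + q2\<^sup>2) * (p1 * p3 + q1 * q3)\<^sup>2
      - (p3\<^sup>2 + q3\<^sup>2) * (p1 * p2 + q1 * q2)\<^sup>2 = 0"
  by algebra

lemma E_t_eq_unit_rows_curve:
  fixes u1 u2 v1 v2 t :: real
  assumes unit: "u1\<^sup>2 + v1\<^sup>2 = 1" "u2\<^sup>2 + v2\<^sup>2 = 1"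
    and inner: "u1 * u2 + v1 * v2 = t" and "t\<^sup>2 \<noteq> 1"
  shows "range (\<lambda>s. (u1 * cos s + v1 * sin s, u2 * cos s + v2 * sin s)) = E_t t"
proof (intro equalityI subsetI)
  fix w assume "w \<in> range (\<lambda>s. (u1 * cos s + v1 * sin s, u2 * cos s + v2 * sin s))"
  then obtain s where w: "w = (u1 * cos s + v1 * sin s, u2 * cos s + v2 * sin s)"
    by blast
  show "w \<in> E_t t"
    using gram_det_plane_vanishes[of u1 v1 u2 v2 "cos s" "sin s"] unit inner
    unfolding w E_t_def by (simp add: algebra_simps)
next
  fix w assume "w \<in> E_t t"
  then obtain x y where w: "w = (x, y)" and on_E: "1 - x\<^sup>2 - y\<^sup>2 - t\<^sup>2 + 2 * x * y * t = 0"
    unfolding E_t_def by auto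
  define D where "D = u1 * v2 - v1 * u2"
  have "D\<^sup>2 = (u1\<^sup>2 + v1\<^sup>2) * (u2\<^sup>2 + v2\<^sup>2) - (u1 * u2 + v1 * v2)\<^sup>2"
    unfolding D_def by algebra
  then have D2: "D\<^sup>2 = 1 - t\<^sup>2"
    using unit inner by simp
  then have "D \<noteq> 0"
    using \<open>t\<^sup>2 \<noteq> 1\<close> by auto
  \<comment> \<open>Cramer's rule for the system with matrix [u1 v1; u2 v2] and right-hand side (x, y).\<close>
  have "(x * v2 - y * v1)\<^sup>2 + (u1 * y - u2 * x)\<^sup>2
      = x\<^sup>2 * (u2\<^sup>2 + v2\<^sup>2) + y\<^sup>2 * (u1\<^sup>2 + v1\<^sup>2) - 2 * x * y * (u1 * u2 + v1 * v2)"
    by algebra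
  also have "\<dots> = D\<^sup>2"
    using unit inner on_E D2 by simp
  finally have "((x * v2 - y * v1) / D)\<^sup>2 + ((u1 * y - u2 * x) / D)\<^sup>2 = 1"
    using \<open>D \<noteq> 0\<close> by (simp add: power_divide flip: add_divide_distrib)
  then obtain s where s: "(x * v2 - y * v1) / D = cos s" "(u1 * y - u2 * x) / D = sin s"
    by (rule sincos_total_2pi)
  have "u1 * (x * v2 - y * v1) + v1 * (u1 * y - u2 * x) = x * D"
    "u2 * (x * v2 - y * v1) + v2 * (u1 * y - u2 * x) = y * D"
    unfolding D_def by algebra+
  then have "u1 * cos s + v1 * sin s = x" "u2 * cos s + v2 * sin s = y"
    using \<open>D \<noteq> 0\<close> unfolding s[symmetric] times_divide_eq_right add_divide_distrib[symmetric] by simp_all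
  then show "w \<in> range (\<lambda>s. (u1 * cos s + v1 * sin s, u2 * cos s + v2 * sin s))"
    unfolding w by blast
qed

theorem lemma3p2:
  fixes a b c :: real and E :: "pt3 set"
  assumes "\<exists>k::int. a + b + c = 2 * pi * of_int k"
    and "sin c \<noteq> 0"
    and "is_hexagon a b c"
    and "inscribed_ellipse a b c E"
  shows "proj_xy ` E = E_t (cos c)"
proof -
  obtain m :: int where "c = 2 * pi * of_int m - (a + b)"
    using assms(1) by (metis add_diff_cancel_left')
  then have sin_c: "sin c = - sin (a + b)" and cos_c: "cos c = cos (a + b)"
    by (simp_all add: sin_diff cos_diff)
  obtain u v where E: "E = range (\<lambda>s. cos s *\<^sub>R u + sin s *\<^sub>R v)"
    and unit: "\<And>i. i < 3 \<Longrightarrow> (coord3 i u)\<^sup>2 + (coord3 i v)\<^sup>2 = 1"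
    and "u \<in> plane_P a b c" "v \<in> plane_P a b c"
    using inscribed_ellipse_centred[OF assms(4)] by blast
  obtain u1 u2 u3 v1 v2 v3 where uv: "u = (u1, u2, u3)" "v = (v1, v2, v3)"
    using prod_cases3 by metis
  have units: "u1\<^sup>2 + v1\<^sup>2 = 1" "u2\<^sup>2 + v2\<^sup>2 = 1" "u3\<^sup>2 + v3\<^sup>2 = 1"
    using unit[of 0] unit[of 1] unit[of 2] by (simp_all add: uv coord3_def)
  have "u1 * sin a + u2 * sin b = u3 * sin (a + b)" "v1 * sin a + v2 * sin b = v3 * sin (a + b)"
    using \<open>u \<in> plane_P a b c\<close> \<open>v \<in> plane_P a b c\<close> sin_c
    by (simp_all add: uv plane_P_def algebra_simps)
  then have "u1 * u2 + v1 * v2 = cos c"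
    unfolding cos_c
    by (rule unit_rows_inner_eq_cos[OF units]) (rule is_hexagon_sin_nonzero[OF assms(3) sin_c assms(2)])+
  moreover have "(cos c)\<^sup>2 \<noteq> 1"
    using assms(2) sin_cos_squared_add[of c] by (metis add_cancel_right_left zero_eq_power2)
  moreover have "proj_xy ` E = range (\<lambda>s. (u1 * cos s + v1 * sin s, u2 * cos s + v2 * sin s))"
    unfolding E uv proj_xy_def by (simp add: image_image mult.commute)
  ultimately show ?thesis
    using E_t_eq_unit_rows_curve[OF units(1,2)] by simp
qed

end
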